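(* For every integer $n\ge0$, $$\mathfrak{C}_n(x)=\sum_{k=0}^{n}k!\,x^k\sum_{j=0}^{n}\binom nj\left(-\frac k2\right)^j S(n-j,k),$$ where $S(m,k)$ denotes the Stirling numbers of the second kind (with $S(m,k)=0$ for $k>m$).
   Context: For $n\ge1$ the central factorial is $x^{[n]}=x\,(x+\tfrac n2-1)(x+\tfrac n2-2)\cdots(x-\tfrac n2+1)$ (a product of $n$ factors), and $x^{[0]}=1$. The central factorial numbers of the second kind $T(n,k)$ ($0\le k\le n$) are defined by $x^n=\sum_{k=0}^n T(n,k)\,x^{[k]}$; equivalently $T(n,k)=\frac1{k!}\sum_{j=0}^k(-1)^j\binom kj\left(\frac k2-j\right)^n$, and $T(n,k)=0$ for $k>n$. The $n$th central Fubini-like polynomial is $\mathfrak{C}_n(x)=\sum_{k=0}^n k!\,T(n,k)\,x^k$. Stirling numbers of the second kind are defined by $x^n=\sum_k S(n,k)\,x(x-1)\cdots(x-k+1)$. *)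

theory Defs
  imports Complex_Main "HOL-Combinatorics.Stirling"
begin

definition central_fact_T :: "nat \<Rightarrow> nat \<Rightarrow> real" where
  "central_fact_T n k =
     (if k > n then 0
      else (1 / fact k) * (\<Sum>j\<le>k. (-1)^j * real (k choose j) * (real k / 2 - real j) ^ n))"

definition central_fubini :: "nat \<Rightarrow> real \<Rightarrow> real" where
  "central_fubini n x = (\<Sum>k\<le>n. fact k * central_fact_T n k * x ^ k)"

end

theory Submission
  imports Defs
begin

text \<open>Write \<open>\<Delta>(m,k) = \<Sum>\<^sub>i (-1)^i C(k,i) (k-i)^m\<close>, the \<open>k\<close>-th forward difference of \<open>x^m\<close> at \<open>0\<close>.
  It satisfies the recurrence of \<open>k! S(m,k)\<close>, hence \<open>\<Delta>(m,k) = k! S(m,k)\<close>. Expanding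
  \<open>(k/2 - i)^n = ((k - i) - k/2)^n\<close> binomially in the explicit formula for \<open>T(n,k)\<close> and
  exchanging the sums gives \<open>k! T(n,k) = \<Sum>\<^sub>j C(n,j) (-k/2)^j \<Delta>(n-j,k)\<close>, which is the theorem
  coefficientwise.\<close>

definition fwd_diff_power :: "nat \<Rightarrow> nat \<Rightarrow> 'a :: comm_ring_1" where
  "fwd_diff_power m k = (\<Sum>i\<le>k. (-1)^i * of_nat (k choose i) * of_nat (k - i) ^ m)"

lemma fwd_diff_power_Suc_Suc:
  "(fwd_diff_power (Suc m) (Suc k) :: 'a :: comm_ring_1) =
     of_nat (Suc k) * (fwd_diff_power m (Suc k) + fwd_diff_power m k)"
proof -
  have "fwd_diff_power (Suc m) (Suc k) - of_nat (Suc k) * fwd_diff_power m (Suc k) =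
     (\<Sum>i\<le>Suc k. - ((-1)^i * of_nat (Suc k choose i) * of_nat (Suc k - i) ^ m * of_nat i) :: 'a)"
    unfolding fwd_diff_power_def sum_distrib_left sum_subtractf[symmetric]
  proof (rule sum.cong)
    fix i assume "i \<in> {..Suc k}"
    then have split: "of_nat (Suc k) = (of_nat (Suc k - i) + of_nat i :: 'a)"
      by (simp flip: of_nat_add)
    show "(-1)^i * of_nat (Suc k choose i) * of_nat (Suc k - i) ^ Suc m -
        of_nat (Suc k) * ((-1)^i * of_nat (Suc k choose i) * of_nat (Suc k - i) ^ m) =
        - ((-1)^i * of_nat (Suc k choose i) * of_nat (Suc k - i) ^ m * of_nat i :: 'a)"
      by (simp only: split) (simp add: algebra_simps)
  qed simp
  also have "\<dots> = (\<Sum>i\<le>k. (-1)^i * of_nat (Suc i * (Suc k choose Suc i)) * of_nat (k - i) ^ m)"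
    by (subst sum.atMost_Suc_shift) (simp add: algebra_simps)
  also have "\<dots> = of_nat (Suc k) * fwd_diff_power m k"
    unfolding fwd_diff_power_def sum_distrib_left Suc_times_binomial
    by (simp add: algebra_simps)
  finally show ?thesis by (simp add: algebra_simps)
qed

lemma fwd_diff_power_eq_Stirling:
  "(fwd_diff_power m k :: 'a :: comm_ring_1) = of_nat (fact k * Stirling m k)"
proof (induction m arbitrary: k)
  case 0
  show ?case
    using choose_alternating_sum[of k, where 'a='a]
    by (cases k) (simp_all add: fwd_diff_power_def mult.commute)
next
  case (Suc m)
  show ?case
  proof (cases k)
    case 0
    then show ?thesis by (simp add: fwd_diff_power_def)
  next
    case (Suc k')
    then show ?thesis
      by (simp only: fwd_diff_power_Suc_Suc Suc.IH) (simp add: algebra_simps)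
  qed
qed

lemma fact_mult_central_fact_T:
  assumes "k \<le> n"
  shows "fact k * central_fact_T n k =
    (\<Sum>j\<le>n. real (n choose j) * (- (real k / 2)) ^ j * fwd_diff_power (n - j) k)"
proof -
  have "fact k * central_fact_T n k = (\<Sum>i\<le>k. (-1)^i * real (k choose i) * (real k / 2 - real i) ^ n)"
    using assms by (simp add: central_fact_T_def)
  also have "\<dots> = (\<Sum>i\<le>k. (-1)^i * real (k choose i) *
      (\<Sum>j\<le>n. real (n choose j) * (- (real k / 2)) ^ j * real (k - i) ^ (n - j)))"
  proof (rule sum.cong)
    fix i assume "i \<in> {..k}"
    then have "real k / 2 - real i = - (real k / 2) + real (k - i)" by (simp add: of_nat_diff)
    then show "(-1)^i * real (k choose i) * (real k / 2 - real i) ^ n = (-1)^i * real (k choose i) *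
        (\<Sum>j\<le>n. real (n choose j) * (- (real k / 2)) ^ j * real (k - i) ^ (n - j))"
      by (simp only: binomial_ring)
  qed simp
  also have "\<dots> = (\<Sum>j\<le>n. \<Sum>i\<le>k. real (n choose j) * (- (real k / 2)) ^ j *
      ((-1)^i * real (k choose i) * real (k - i) ^ (n - j)))"
    unfolding sum_distrib_left by (subst sum.swap) (simp only: mult_ac)
  also have "\<dots> = (\<Sum>j\<le>n. real (n choose j) * (- (real k / 2)) ^ j * fwd_diff_power (n - j) k)"
    by (simp only: fwd_diff_power_def sum_distrib_left)
  finally show ?thesis .
qed

lemma central_fact_T_eq_Stirling_sum:
  "central_fact_T n k =
    (\<Sum>j\<le>n. real (n choose j) * (- (real k / 2)) ^ j * real (Stirling (n - j) k))"
proof (cases "k \<le> n")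
  case True
  then have "fact k * central_fact_T n k =
      fact k * (\<Sum>j\<le>n. real (n choose j) * (- (real k / 2)) ^ j * real (Stirling (n - j) k))"
    by (simp add: fact_mult_central_fact_T fwd_diff_power_eq_Stirling sum_distrib_left algebra_simps)
  then show ?thesis by simp
next
  case False
  then show ?thesis by (simp add: central_fact_T_def)
qed

theorem theorem3:
  fixes n :: nat and x :: real
  shows "central_fubini n x =
    (\<Sum>k\<le>n. fact k * x ^ k *
       (\<Sum>j\<le>n. real (n choose j) * (- (real k / 2)) ^ j * real (Stirling (n - j) k)))"
  unfolding central_fubini_def central_fact_T_eq_Stirling_sum
  by (rule sum.cong) (simp_all only: mult_ac)

end
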